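(* For every integer $k \geq 1$, let $\mathcal{C}(k)$ denote the greatest common divisor of all the sums $\sum_{i=1}^{k} C_{n+i}$, $n \geq 0$. Then $$\mathcal{C}(k) = \begin{cases} 2P_{k}, & \text{if } k \text{ is even};\\ Q_{k}, & \text{if } k \text{ is odd}.\end{cases}$$
   Context: The Pell sequence $(P_n)_{n\ge0}$ is defined by $P_0=0$, $P_1=1$, $P_n = 2P_{n-1}+P_{n-2}$. The associated Pell sequence $(Q_n)_{n\ge0}$ is defined by $Q_0=1$, $Q_1=1$, $Q_n=2Q_{n-1}+Q_{n-2}$. The Lucas-balancing sequence $(C_n)_{n\ge0}$ is defined by $C_0=1$, $C_1=3$, $C_n=6C_{n-1}-C_{n-2}$. *)

theory Defs
  imports Main
begin

fun pell :: "nat \<Rightarrow> nat" where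
  "pell 0 = 0" | "pell (Suc 0) = 1"
| "pell (Suc (Suc n)) = 2 * pell (Suc n) + pell n"

fun assoc_pell :: "nat \<Rightarrow> nat" where
  "assoc_pell 0 = 1" | "assoc_pell (Suc 0) = 1"
| "assoc_pell (Suc (Suc n)) = 2 * assoc_pell (Suc n) + assoc_pell n"

(* Lucas-balancing numbers; defined over int since the recurrence has a subtraction *)
fun lucas_bal :: "nat \<Rightarrow> int" where
  "lucas_bal 0 = 1" | "lucas_bal (Suc 0) = 3"
| "lucas_bal (Suc (Suc n)) = 6 * lucas_bal (Suc n) - lucas_bal n"

definition CC :: "nat \<Rightarrow> int" where
  "CC k = Gcd {\<Sum>i=1..k. lucas_bal (n + i) | n. True}"

end

theory Submission
  imports Defs Complex_Main
begin

text \<open>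
  Let \<open>\<alpha> = 1 + \<surd>2\<close> and \<open>\<beta> = 1 - \<surd>2\<close> be the roots of \<open>x\<^sup>2 = 2x + 1\<close>. The Binet formulas
  are \<open>2\<surd>2 P n = \<alpha>^n - \<beta>^n\<close>, \<open>2 Q n = \<alpha>^n + \<beta>^n\<close> and \<open>2 C n = \<alpha>^(2n) + \<beta>^(2n)\<close>.
  Since \<open>\<alpha>\<^sup>2 - 1 = 2\<alpha>\<close>, consecutive even powers of \<open>\<alpha>\<close> telescope and the window sum
  \<open>S n = C (n+1) + \<dots> + C (n+k)\<close> satisfies
  \<open>4 S n = \<alpha>^(2n+1+2k) + \<beta>^(2n+1+2k) - \<alpha>^(2n+1) - \<beta>^(2n+1)\<close>.
  Because \<open>\<alpha>\<beta> = -1\<close>, the right-hand side factors as \<open>8 P k P (2n+k+1)\<close> for even \<open>k\<close> and as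
  \<open>4 Q k Q (2n+k+1)\<close> for odd \<open>k\<close>. Hence the claimed gcd divides every \<open>S n\<close>, and it is
  the greatest common divisor because the cofactors for \<open>n = 0\<close> and \<open>n = 1\<close> are coprime: consecutive terms of
  \<open>u (m+2) = 2 u (m+1) + u m\<close> are coprime, so \<open>u m\<close> and \<open>u (m+2)\<close> are coprime whenever \<open>u m\<close> is
  odd, which holds for \<open>P (k+1)\<close> with \<open>k\<close> even and for every \<open>Q m\<close>.
\<close>

lemma linear_recurrence_closed_form:
  fixes u :: "nat \<Rightarrow> 'a::comm_ring_1"
  assumes rec: "\<And>n. u (Suc (Suc n)) = p * u (Suc n) + q * u n"
    and r: "r\<^sup>2 = p * r + q" and s: "s\<^sup>2 = p * s + q"
    and "u 0 = a + b" and "u 1 = a * r + b * s"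
  shows "u n = a * r ^ n + b * s ^ n"
proof (induction n rule: induct_nat_012)
  case (ge2 m)
  have "u (Suc (Suc m)) = p * (a * r ^ Suc m + b * s ^ Suc m) + q * (a * r ^ m + b * s ^ m)"
    using ge2 rec by simp
  also have "\<dots> = a * r ^ m * (p * r + q) + b * s ^ m * (p * s + q)"
    by (simp add: algebra_simps)
  also have "\<dots> = a * r ^ Suc (Suc m) + b * s ^ Suc (Suc m)"
    unfolding r [symmetric] s [symmetric] by (simp add: power2_eq_square algebra_simps)
  finally show ?case .
qed (use assms in simp_all)

definition \<alpha> :: real where "\<alpha> = 1 + sqrt 2"
definition \<beta> :: real where "\<beta> = 1 - sqrt 2"

lemma \<alpha>_squared: "\<alpha>\<^sup>2 = 2 * \<alpha> + 1"
  unfolding \<alpha>_def by (simp add: power2_eq_square algebra_simps)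

lemma \<beta>_squared: "\<beta>\<^sup>2 = 2 * \<beta> + 1"
  unfolding \<beta>_def by (simp add: power2_eq_square algebra_simps)

lemma \<alpha>_times_\<beta>: "\<alpha> * \<beta> = -1"
  unfolding \<alpha>_def \<beta>_def by (simp add: algebra_simps)

lemma pell_binet: "2 * sqrt 2 * pell n = \<alpha> ^ n - \<beta> ^ n"
  using linear_recurrence_closed_form [where u = "\<lambda>n. 2 * sqrt 2 * pell n" and a = 1 and b = "-1",
      OF _ \<alpha>_squared \<beta>_squared]
  by (simp add: \<alpha>_def \<beta>_def algebra_simps)

lemma assoc_pell_binet: "2 * real (assoc_pell n) = \<alpha> ^ n + \<beta> ^ n"
  using linear_recurrence_closed_form [where u = "\<lambda>n. 2 * real (assoc_pell n)" and a = 1 and b = 1,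
      OF _ \<alpha>_squared \<beta>_squared]
  by (simp add: \<alpha>_def \<beta>_def algebra_simps)

lemma pell_root_square_lucas_bal_root:
  fixes x :: "'a::comm_ring_1"
  assumes "x\<^sup>2 = 2 * x + 1"
  shows "(x\<^sup>2)\<^sup>2 = 6 * x\<^sup>2 + - 1"
proof -
  have "(x\<^sup>2)\<^sup>2 - (6 * x\<^sup>2 + - 1) = (x\<^sup>2 - (2 * x + 1)) * (x\<^sup>2 + 2 * x - 1)"
    by (simp add: power2_eq_square algebra_simps)
  then show ?thesis
    using assms by simp
qed

lemma lucas_bal_binet: "2 * real_of_int (lucas_bal n) = \<alpha> ^ (2 * n) + \<beta> ^ (2 * n)"
proof -
  have "2 * real_of_int (lucas_bal n) = 1 * (\<alpha>\<^sup>2) ^ n + 1 * (\<beta>\<^sup>2) ^ n"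
  proof (rule linear_recurrence_closed_form [where u = "\<lambda>n. 2 * real_of_int (lucas_bal n)" and a = 1 and b = 1])
    show "(\<alpha>\<^sup>2)\<^sup>2 = 6 * \<alpha>\<^sup>2 + - 1" "(\<beta>\<^sup>2)\<^sup>2 = 6 * \<beta>\<^sup>2 + - 1"
      by (rule pell_root_square_lucas_bal_root, rule \<alpha>_squared \<beta>_squared)+
    show "2 * real_of_int (lucas_bal 1) = 1 * \<alpha>\<^sup>2 + 1 * \<beta>\<^sup>2"
      unfolding \<alpha>_squared \<beta>_squared by (simp add: \<alpha>_def \<beta>_def)
  qed simp_all
  then show ?thesis
    by (simp add: power_mult)
qed

lemma sum_even_powers_telescope:
  fixes x :: "'a::comm_ring_1"
  assumes "x\<^sup>2 = 2 * x + 1"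
  shows "2 * (\<Sum>i=1..k. x ^ (2 * (n + i))) = x ^ (2 * n + 1 + 2 * k) - x ^ (2 * n + 1)"
proof (induction k)
  case (Suc k)
  have "x ^ (2 * n + 1 + 2 * Suc k) = x ^ (2 * n + 1 + 2 * k) * x\<^sup>2"
    using power_add [of x "2 * n + 1 + 2 * k" 2] by simp
  also have "\<dots> = x ^ (2 * n + 1 + 2 * k) + 2 * x ^ (2 * (n + Suc k))"
    unfolding assms by (simp add: algebra_simps)
  finally show ?case
    using Suc.IH by (simp add: algebra_simps)
qed simp

lemma lucas_bal_window_sum_binet:
  "4 * real_of_int (\<Sum>i=1..k. lucas_bal (n + i)) =
     \<alpha> ^ (2 * n + 1 + 2 * k) + \<beta> ^ (2 * n + 1 + 2 * k) - (\<alpha> ^ (2 * n + 1) + \<beta> ^ (2 * n + 1))"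
proof -
  have "4 * real_of_int (\<Sum>i=1..k. lucas_bal (n + i)) =
      2 * (\<Sum>i=1..k. 2 * real_of_int (lucas_bal (n + i)))"
    by (simp add: sum_distrib_left)
  also have "\<dots> = 2 * (\<Sum>i=1..k. \<alpha> ^ (2 * (n + i))) + 2 * (\<Sum>i=1..k. \<beta> ^ (2 * (n + i)))"
    by (simp add: lucas_bal_binet sum.distrib algebra_simps)
  finally show ?thesis
    using sum_even_powers_telescope [OF \<alpha>_squared, of n k] sum_even_powers_telescope [OF \<beta>_squared, of n k]
    by simp
qed

lemma diff_powers_mult:
  fixes x y :: "'a::comm_ring_1"
  shows "(x ^ k - y ^ k) * (x ^ (j + k) - y ^ (j + k)) =
    x ^ (j + 2 * k) + y ^ (j + 2 * k) - (x * y) ^ k * (x ^ j + y ^ j)"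
  by (simp add: algebra_simps power_add power_mult_distrib power_mult power2_eq_square)

lemma sum_powers_mult:
  fixes x y :: "'a::comm_ring_1"
  shows "(x ^ k + y ^ k) * (x ^ (j + k) + y ^ (j + k)) =
    x ^ (j + 2 * k) + y ^ (j + 2 * k) + (x * y) ^ k * (x ^ j + y ^ j)"
  by (simp add: algebra_simps power_add power_mult_distrib power_mult power2_eq_square)

lemma lucas_bal_window_sum_even:
  assumes "even k"
  shows "(\<Sum>i=1..k. lucas_bal (n + i)) = 2 * int (pell k) * int (pell (2 * n + k + 1))"
proof -
  have "8 * real (pell k) * real (pell (2 * n + k + 1)) =
      (2 * sqrt 2 * pell k) * (2 * sqrt 2 * pell (2 * n + 1 + k))"
    by (simp add: algebra_simps)
  also have "\<dots> = \<alpha> ^ (2 * n + 1 + 2 * k) + \<beta> ^ (2 * n + 1 + 2 * k) - (\<alpha> ^ (2 * n + 1) + \<beta> ^ (2 * n + 1))"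
    using assms by (simp only: pell_binet diff_powers_mult \<alpha>_times_\<beta>) simp
  also have "\<dots> = 4 * real_of_int (\<Sum>i=1..k. lucas_bal (n + i))"
    by (rule lucas_bal_window_sum_binet [symmetric])
  finally have "real_of_int (\<Sum>i=1..k. lucas_bal (n + i)) = real_of_int (2 * int (pell k) * int (pell (2 * n + k + 1)))"
    by simp
  then show ?thesis
    by (simp only: of_int_eq_iff)
qed

lemma lucas_bal_window_sum_odd:
  assumes "odd k"
  shows "(\<Sum>i=1..k. lucas_bal (n + i)) = int (assoc_pell k) * int (assoc_pell (2 * n + k + 1))"
proof -
  have "4 * real (assoc_pell k) * real (assoc_pell (2 * n + k + 1)) =
      (2 * real (assoc_pell k)) * (2 * real (assoc_pell (2 * n + 1 + k)))"
    by (simp add: algebra_simps)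
  also have "\<dots> = \<alpha> ^ (2 * n + 1 + 2 * k) + \<beta> ^ (2 * n + 1 + 2 * k) - (\<alpha> ^ (2 * n + 1) + \<beta> ^ (2 * n + 1))"
    using assms by (simp only: assoc_pell_binet sum_powers_mult \<alpha>_times_\<beta>) simp
  also have "\<dots> = 4 * real_of_int (\<Sum>i=1..k. lucas_bal (n + i))"
    by (rule lucas_bal_window_sum_binet [symmetric])
  finally have "real_of_int (\<Sum>i=1..k. lucas_bal (n + i)) = real_of_int (int (assoc_pell k) * int (assoc_pell (2 * n + k + 1)))"
    by simp
  then show ?thesis
    by (simp only: of_int_eq_iff)
qed

lemma coprime_Suc_of_recurrence:
  fixes u :: "nat \<Rightarrow> nat"
  assumes rec: "\<And>n. u (Suc (Suc n)) = c * u (Suc n) + u n"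
    and "coprime (u 0) (u 1)"
  shows "coprime (u n) (u (Suc n))"
proof (induction n)
  case (Suc n)
  then show ?case
    by (simp add: rec coprime_iff_gcd_eq_1 gcd_add_mult gcd.commute)
qed (use assms in simp)

lemma coprime_Suc_Suc_of_recurrence:
  fixes u :: "nat \<Rightarrow> nat"
  assumes "u (Suc (Suc n)) = c * u (Suc n) + u n"
    and "coprime (u n) (u (Suc n))" and "coprime (u n) c"
  shows "coprime (u n) (u (Suc (Suc n)))"
proof -
  have "gcd (u n) (u (Suc (Suc n))) = gcd (u n) (c * u (Suc n))"
    by (simp add: assms(1) add.commute [of "c * u (Suc n)"])
  moreover have "coprime (u n) (c * u (Suc n))"
    using assms(2,3) by simp
  ultimately show ?thesis
    by (simp add: coprime_iff_gcd_eq_1)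
qed

lemma even_pell_iff: "even (pell n) \<longleftrightarrow> even n"
  by (induction n rule: pell.induct) auto

lemma odd_assoc_pell: "odd (assoc_pell n)"
  by (induction n rule: assoc_pell.induct) auto

lemma coprime_pell_Suc_Suc:
  assumes "odd n"
  shows "coprime (pell n) (pell (Suc (Suc n)))"
  using assms even_pell_iff [of n]
  by (intro coprime_Suc_Suc_of_recurrence [where c = 2] coprime_Suc_of_recurrence [where c = 2]) simp_all

lemma coprime_assoc_pell_Suc_Suc: "coprime (assoc_pell n) (assoc_pell (Suc (Suc n)))"
  using odd_assoc_pell [of n]
  by (intro coprime_Suc_Suc_of_recurrence [where c = 2] coprime_Suc_of_recurrence [where c = 2]) simp_all

lemma Gcd_range_eq_common_factor:
  fixes g :: "nat \<Rightarrow> 'a::semiring_Gcd"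
  assumes "coprime (g i) (g j)"
  shows "Gcd (range (\<lambda>n. d * g n)) = normalize d"
proof -
  have "is_unit (Gcd (range g))"
    using assms by (rule coprime_common_divisor) (simp_all add: Gcd_dvd)
  then have "Gcd (range g) = 1"
    using is_unit_normalize normalize_Gcd by metis
  moreover have "range (\<lambda>n. d * g n) = (*) d ` range g"
    by auto
  ultimately show ?thesis
    by (simp add: Gcd_mult)
qed

lemma CC_eq_Gcd_range: "CC k = Gcd (range (\<lambda>n. \<Sum>i=1..k. lucas_bal (n + i)))"
  by (simp add: CC_def full_SetCompr_eq)

theorem theorem18:
  fixes k :: nat
  assumes "k \<ge> 1"
  shows "CC k = (if even k then 2 * int (pell k) else int (assoc_pell k))"
proof (cases "even k")
  case True
  have "CC k = Gcd (range (\<lambda>n. 2 * int (pell k) * int (pell (2 * n + k + 1))))"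
    by (simp only: CC_eq_Gcd_range lucas_bal_window_sum_even [OF True])
  also have "\<dots> = normalize (2 * int (pell k))"
    by (rule Gcd_range_eq_common_factor [of _ 0 1])
      (use coprime_pell_Suc_Suc [of "k + 1"] True in \<open>simp del: pell.simps\<close>)
  finally show ?thesis
    using True by simp
next
  case False
  have "CC k = Gcd (range (\<lambda>n. int (assoc_pell k) * int (assoc_pell (2 * n + k + 1))))"
    by (simp only: CC_eq_Gcd_range lucas_bal_window_sum_odd [OF False])
  also have "\<dots> = normalize (int (assoc_pell k))"
    by (rule Gcd_range_eq_common_factor [of _ 0 1])
      (use coprime_assoc_pell_Suc_Suc [of "k + 1"] in \<open>simp del: assoc_pell.simps\<close>)
  finally show ?thesis
    using False by simp
qed

end
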